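(* Let $l\in\mathbb N$, $N_1,\ldots,N_l\in\mathbb N$ and parameters $\zeta_1,\ldots,\zeta_l$. Then the connected $\vec u$-bracket satisfies $$\langle t_{(N_1)}(\zeta_1;\cdot)\otimes\cdots\otimes t_{(N_l)}(\zeta_l;\cdot)\rangle_{\vec u}=\frac12\sum_{\alpha\in\Pi(l)}\mu(\alpha,\mathbb 1_l)\sum_{m\in\mathbb Z}u_m^{M_\alpha m}\prod_{j=1}^l(\zeta_j^m+\zeta_j^{-m}),\qquad M_\alpha:=\sum_{A\in\alpha}\max_{a\in A}N_a .$$
   Context: $\mathscr P$ is the set of partitions, $r_m(\lambda)$ the multiplicity of $m$ in $\lambda$. Formal variables $\vec u=(u_1,u_2,\dots)$, $u_\lambda=\prod_j u_{\lambda_j}$, $u_0=1$, $u_{-m}=u_m^{-1}$; $\langle f\rangle_{\vec u}:=\sum_\lambda f(\lambda)u_\lambda/\sum_\lambda u_\lambda$. $t_{(N)}(\zeta;\lambda):=1+\sum_{m\ge1}(\zeta^m+\zeta^{-m})\delta_{r_m(\lambda)\ge Nm}$ ($\delta_X=1$ if $X$ true, else $0$). $\Pi(l)$ is the set of set partitions of $[l]=\{1,\dots,l\}$, $\mathbb 1_l=\{[l]\}$; for $\alpha\le\beta$ in $\Pi(l)$ (refinement), $\mu(\alpha,\beta)=\prod_{B\in\beta}(-1)^{|\alpha_B|+1}(|\alpha_B|-1)!$ where $\alpha_B$ is the set partition of $B$ induced by $\alpha$. For $f_1,\dots,f_l$ and $A\subseteq[l]$, $f_A:=\prod_{a\in A}f_a$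 (pointwise), and the connected bracket is $\langle f_1\otimes\cdots\otimes f_l\rangle_{\vec u}:=\sum_{\alpha\in\Pi(l)}\mu(\alpha,\mathbb 1_l)\prod_{A\in\alpha}\langle f_A\rangle_{\vec u}$. *)

theory Defs
  imports "HOL-Analysis.Analysis" "HOL-Library.Multiset" "HOL-Library.FuncSet"
          "HOL-Library.Disjoint_Sets"
begin

text \<open>Formal power series in the variables u_1, u_2, ... with complex coefficients.
  A monomial prod_m u_m^(e_m) is encoded as the multiset of variable indices
  (count X m = exponent of u_m).\<close>

type_synonym ser = "nat multiset \<Rightarrow> complex"

definition mono :: "nat multiset \<Rightarrow> ser" where
  "mono X = (\<lambda>r. if r = X then 1 else 0)"

definition ssum :: "('i \<Rightarrow> ser) \<Rightarrow> 'i set \<Rightarrow> ser" where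
  "ssum F I = (\<lambda>r. \<Sum>\<^sub>\<infinity> i\<in>I. F i r)"

definition smul :: "ser \<Rightarrow> ser \<Rightarrow> ser" where
  "smul F G = (\<lambda>r. \<Sum>s\<in>{s. s \<subseteq># r}. F s * G (r - s))"

definition sprod :: "('i \<Rightarrow> ser) \<Rightarrow> 'i set \<Rightarrow> ser" where
  "sprod F I = (\<lambda>r. \<Sum>s\<in>{s \<in> I \<rightarrow>\<^sub>E {x. x \<subseteq># r}. (\<Sum>i\<in>I. s i) = r}.
                      \<Prod>i\<in>I. F i (s i))"

definition sdiv :: "ser \<Rightarrow> ser \<Rightarrow> ser" where
  "sdiv F G = (THE H. smul H G = F)"

text \<open>Partitions = finite multisets of positive integers; r_m(lam) = count lam m;
  u_lam is the monomial encoded by lam itself.\<close>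
definition partitions :: "nat multiset set" where
  "partitions = {lam. 0 \<notin># lam}"

definition ubracket :: "(nat multiset \<Rightarrow> complex) \<Rightarrow> ser" where
  "ubracket f = sdiv (ssum (\<lambda>lam. \<lambda>r. f lam * mono lam r) partitions)
                     (ssum mono partitions)"

definition t_N :: "nat \<Rightarrow> complex \<Rightarrow> nat multiset \<Rightarrow> complex" where
  "t_N N z lam = 1 + (\<Sum>\<^sub>\<infinity> m\<in>{1::nat..}. (z ^ m + inverse z ^ m) *
                       (if count lam m \<ge> N * m then 1 else 0))"

definition set_partitions :: "nat \<Rightarrow> nat set set set" where
  "set_partitions l = {\<alpha>. partition_on {1..l} \<alpha>}"

text \<open>Moebius function mu(alpha,beta) for alpha refining beta; alpha_B = blocks of alpha inside B.\<close>
definition mobius :: "nat set set \<Rightarrow> nat set set \<Rightarrow> int" where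
  "mobius \<alpha> \<beta> = (\<Prod>B\<in>\<beta>. (-1) ^ (card {A\<in>\<alpha>. A \<subseteq> B} + 1)
                             * fact (card {A\<in>\<alpha>. A \<subseteq> B} - 1))"

definition cbracket :: "nat \<Rightarrow> (nat \<Rightarrow> nat multiset \<Rightarrow> complex) \<Rightarrow> ser" where
  "cbracket l f = (\<lambda>r. \<Sum>\<alpha>\<in>set_partitions l. of_int (mobius \<alpha> {{1..l}}) *
                     sprod (\<lambda>A. ubracket (\<lambda>lam. \<Prod>a\<in>A. f a lam)) \<alpha> r)"

text \<open>Monomial u_m^e for m,e integers, with u_0 = 1 and u_{-m} = u_m^{-1}
  (only used where the resulting exponent sgn(m)*e of u_|m| is nonnegative).\<close>
definition umon :: "int \<Rightarrow> int \<Rightarrow> nat multiset" where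
  "umon m e = replicate_mset (nat (sgn m * e)) (nat \<bar>m\<bar>)"

definition Mexp :: "(nat \<Rightarrow> nat) \<Rightarrow> nat set set \<Rightarrow> nat" where
  "Mexp N \<alpha> = (\<Sum>A\<in>\<alpha>. Max (N ` A))"

end

theory Submission
  imports Defs
begin

text \<open>
  Each \<open>t\<^sub>(\<^sub>N\<^sub>)(\<zeta>; \<lambda>)\<close> is the finite sum of \<open>\<zeta>\<^sup>k\<close> over those \<open>k \<in> \<int>\<close> with
  \<open>r\<^bsub>|k|\<^esub>(\<lambda>) \<ge> N |k|\<close>. For a block \<open>A\<close> and exponents \<open>m \<in> \<int>\<^sup>A\<close> these conditions together say
  that \<open>\<lambda>\<close> contains a threshold partition \<open>\<tau>\<^sub>A(m)\<close>, and \<open>\<Sum>\<^sub>\<lambda> [\<tau> \<subseteq> \<lambda>] u\<^sub>\<lambda> = u\<^sub>\<tau> \<Sum>\<^sub>\<lambda> u\<^sub>\<lambda>\<close>;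
  hence \<open>\<langle>\<Prod>\<^sub>a\<^sub>\<in>\<^sub>A t\<^sub>a\<rangle> = \<Sum>\<^sub>m \<zeta>\<^sup>m u\<^bsub>\<tau>\<^sub>A(m)\<^esub>\<close>, and the coefficient of \<open>\<zeta>\<^sup>m u\<^sub>r\<close> in the connected bracket
  is the cumulant \<open>\<Sum>\<^sub>\<alpha> \<mu>(\<alpha>, \<one>) [\<Sum>\<^sub>A\<^sub>\<in>\<^sub>\<alpha> \<tau>\<^sub>A(m) = r]\<close>.
  The threshold is additive under splitting \<open>[l]\<close> according to the value of \<open>|m\<^sub>j|\<close>, and summed over
  all partitions with prescribed traces on the two parts the Moebius weights cancel. So only exponent
  vectors with \<open>|m\<^sub>j| = k\<close> for all \<open>j\<close> survive; for them \<open>\<Sum>\<^sub>A \<tau>\<^sub>A(m)\<close> consists of \<open>M\<^sub>\<alpha> k\<close> parts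
  equal to \<open>k\<close>, which is the right-hand side.
\<close>

section \<open>Formal series and the \<open>u\<close>-bracket\<close>

lemma finite_subseteq_mset: "finite {s :: 'a multiset. s \<subseteq># r}"
proof (rule finite_subset)
  show "{s. s \<subseteq># r} \<subseteq> mset ` {xs. set xs \<subseteq> set_mset r \<and> length xs \<le> size r}"
  proof
    fix s assume "s \<in> {s. s \<subseteq># r}"
    moreover obtain xs where "s = mset xs" by (metis ex_mset)
    ultimately show "s \<in> mset ` {xs. set xs \<subseteq> set_mset r \<and> length xs \<le> size r}"
      using mset_subset_eqD size_mset_mono by fastforce
  qed
  show "finite (mset ` {xs. set xs \<subseteq> set_mset r \<and> length xs \<le> size r})"
    by (intro finite_imageI finite_lists_length_le) simp
qed

lemma subseteq_mset_sum:
  assumes "finite S" "x \<in> S"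
  shows "f x \<subseteq># (\<Sum>i\<in>S. f i)"
  using assms by (auto simp: subseteq_mset_def count_sum intro!: member_le_sum)

lemma smul_right_cancel:
  assumes eq: "smul H1 G = smul H2 G" and G0: "G {#} = 1"
  shows "H1 = H2"
proof
  fix r
  show "H1 r = H2 r"
  proof (induction "size r" arbitrary: r rule: less_induct)
    case less
    have split: "smul H G r = H r + (\<Sum>s\<in>{s. s \<subset># r}. H s * G (r - s))" for H
    proof -
      have "{s. s \<subseteq># r} = insert r {s. s \<subset># r}" by auto
      moreover have "finite {s. s \<subset># r}"
        by (rule finite_subset[OF _ finite_subseteq_mset[of r]]) auto
      ultimately show ?thesis unfolding smul_def using G0 by simp
    qed
    have "(\<Sum>s\<in>{s. s \<subset># r}. H1 s * G (r - s)) = (\<Sum>s\<in>{s. s \<subset># r}. H2 s * G (r - s))"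
      using less mset_subset_size by (intro sum.cong) auto
    with split[of H1] split[of H2] eq show ?case by (metis add_right_cancel)
  qed
qed

lemma ssum_partitions:
  "ssum (\<lambda>lam r. f lam * mono lam r) partitions r = (if 0 \<notin># r then f r else 0)"
proof -
  have "ssum (\<lambda>lam r. f lam * mono lam r) partitions r
      = (\<Sum>\<^sub>\<infinity>lam\<in>partitions \<inter> {r}. f lam * mono lam r)"
    unfolding ssum_def by (intro infsum_cong_neutral) (auto simp: mono_def)
  then show ?thesis by (auto simp: partitions_def mono_def)
qed

text \<open>The series \<open>\<Sum>\<^sub>i c\<^sub>i u\<^bsup>e\<^sub>i\<^esup>\<close>; meaningful only when the fibres of \<open>e\<close> are finite.\<close>
definition mono_series :: "('i \<Rightarrow> complex) \<Rightarrow> ('i \<Rightarrow> nat multiset) \<Rightarrow> 'i set \<Rightarrow> ser" where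
  "mono_series c e I = (\<lambda>r. \<Sum>i\<in>{i\<in>I. e i = r}. c i)"

text \<open>If \<open>f \<lambda>\<close> sums \<open>c\<^sub>i\<close> over the \<open>i\<close> with \<open>e\<^sub>i \<subseteq> \<lambda>\<close>, then \<open>\<Sum>\<^sub>\<lambda> f \<lambda> u\<^sub>\<lambda>\<close> factors as
  \<open>(\<Sum>\<^sub>i c\<^sub>i u\<^bsup>e\<^sub>i\<^esup>) \<cdot> \<Sum>\<^sub>\<lambda> u\<^sub>\<lambda>\<close>, by writing \<open>\<lambda> = e\<^sub>i + (\<lambda> - e\<^sub>i)\<close>.\<close>
lemma ubracket_eq_mono_series:
  assumes e0: "\<And>i. i \<in> I \<Longrightarrow> 0 \<notin># e i"
    and fin: "\<And>lam. finite {i\<in>I. e i \<subseteq># lam}"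
    and f: "\<And>lam. 0 \<notin># lam \<Longrightarrow> f lam = (\<Sum>i\<in>{i\<in>I. e i \<subseteq># lam}. c i)"
  shows "ubracket f = mono_series c e I"
proof -
  define G where "G = ssum mono partitions"
  define F where "F = ssum (\<lambda>lam r. f lam * mono lam r) partitions"
  have G_eq: "G r = (if 0 \<notin># r then 1 else 0)" for r
    using ssum_partitions[of "\<lambda>_. 1" r] by (simp add: G_def)
  have F_eq: "F r = (if 0 \<notin># r then f r else 0)" for r
    by (simp add: F_def ssum_partitions)
  have factor: "smul (mono_series c e I) G = F"
  proof
    fix r
    have "smul (mono_series c e I) G r = (\<Sum>s\<in>{s. s \<subseteq># r}. \<Sum>i\<in>{i\<in>{i\<in>I. e i \<subseteq># r}. e i = s}. c i * G (r - e i))"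
      unfolding smul_def mono_series_def
      by (intro sum.cong refl) (auto simp: sum_distrib_right intro!: sum.cong)
    also have "\<dots> = (\<Sum>i\<in>{i\<in>I. e i \<subseteq># r}. c i * G (r - e i))"
      by (rule sum.group[OF fin finite_subseteq_mset]) auto
    also have "\<dots> = F r"
    proof (cases "0 \<in># r")
      case True
      then have "0 \<in># r - e i" if "i \<in> I" for i
        using e0[OF that] True by (simp add: in_diff_count not_in_iff)
      then show ?thesis using True by (simp add: F_eq G_eq)
    next
      case False
      then have "G (r - e i) = 1" for i by (simp add: G_eq) (meson in_diffD)
      then show ?thesis using False by (simp add: F_eq f)
    qed
    finally show "smul (mono_series c e I) G r = F r" .
  qed
  have "sdiv F G = mono_series c e I"
    unfolding sdiv_def
  proof (rule the_equality)
    show "smul (mono_series c e I) G = F" by (rule factor)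
    show "H = mono_series c e I" if "smul H G = F" for H
      using that factor G_eq[of "{#}"] by (intro smul_right_cancel[of H G]) simp_all
  qed
  then show ?thesis by (simp add: ubracket_def F_def G_def)
qed

lemma sprod_cong: "(\<And>A. A \<in> \<alpha> \<Longrightarrow> F A = F' A) \<Longrightarrow> sprod F \<alpha> = sprod F' \<alpha>"
  unfolding sprod_def by (intro ext sum.cong refl prod.cong) auto

lemma sprod_mono_series:
  assumes fin: "finite \<alpha>"
    and fibre: "\<And>A x. A \<in> \<alpha> \<Longrightarrow> finite {i\<in>I A. e A i = x}"
  shows "sprod (\<lambda>A. mono_series (c A) (e A) (I A)) \<alpha> r =
     (\<Sum>m\<in>{m\<in>PiE \<alpha> I. (\<Sum>A\<in>\<alpha>. e A (m A)) = r}. \<Prod>A\<in>\<alpha>. c A (m A))"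
proof -
  define S where "S = {s \<in> \<alpha> \<rightarrow>\<^sub>E {x. x \<subseteq># r}. (\<Sum>A\<in>\<alpha>. s A) = r}"
  define T where "T = {m\<in>PiE \<alpha> I. (\<Sum>A\<in>\<alpha>. e A (m A)) = r}"
  define g where "g = (\<lambda>m. \<lambda>A\<in>\<alpha>. e A (m A))"
  have "finite S" unfolding S_def
    by (rule finite_subset[of _ "PiE \<alpha> (\<lambda>_. {x. x \<subseteq># r})"])
       (auto intro!: finite_PiE fin finite_subseteq_mset)
  have "T \<subseteq> PiE \<alpha> (\<lambda>A. \<Union>x\<in>{x. x \<subseteq># r}. {i\<in>I A. e A i = x})"
    using subseteq_mset_sum[OF fin, of _ "\<lambda>A. e A (_ A)"] by (auto simp: T_def PiE_iff extensional_def)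
  then have "finite T"
    by (rule finite_subset) (intro finite_PiE fin finite_UN_I finite_subseteq_mset fibre)
  have gT: "g ` T \<subseteq> S"
    using subseteq_mset_sum[OF fin] by (auto simp: g_def T_def S_def PiE_iff)
  have fibre_g: "PiE \<alpha> (\<lambda>A. {i\<in>I A. e A i = s A}) = {m\<in>T. g m = s}" if "s \<in> S" for s
  proof (intro set_eqI iffI)
    fix m assume m: "m \<in> PiE \<alpha> (\<lambda>A. {i\<in>I A. e A i = s A})"
    have "(\<Sum>A\<in>\<alpha>. e A (m A)) = (\<Sum>A\<in>\<alpha>. s A)" using m by (intro sum.cong) auto
    then show "m \<in> {m\<in>T. g m = s}"
      using m that by (auto simp: T_def S_def g_def PiE_iff extensional_def)
  qed (auto simp: T_def g_def PiE_iff)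
  have "sprod (\<lambda>A. mono_series (c A) (e A) (I A)) \<alpha> r
      = (\<Sum>s\<in>S. \<Prod>A\<in>\<alpha>. \<Sum>i\<in>{i\<in>I A. e A i = s A}. c A i)"
    by (simp add: sprod_def mono_series_def S_def)
  also have "\<dots> = (\<Sum>s\<in>S. \<Sum>m\<in>PiE \<alpha> (\<lambda>A. {i\<in>I A. e A i = s A}). \<Prod>A\<in>\<alpha>. c A (m A))"
    by (intro sum.cong refl prod_sum_PiE fin fibre)
  also have "\<dots> = (\<Sum>s\<in>S. \<Sum>m\<in>{m\<in>T. g m = s}. \<Prod>A\<in>\<alpha>. c A (m A))"
    by (intro sum.cong refl) (simp add: fibre_g)
  also have "\<dots> = (\<Sum>m\<in>T. \<Prod>A\<in>\<alpha>. c A (m A))"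
    by (rule sum.group[OF \<open>finite T\<close> \<open>finite S\<close> gT])
  finally show ?thesis by (simp add: T_def)
qed

section \<open>Expanding products of \<open>t\<^sub>(\<^sub>N\<^sub>)\<close>\<close>

definition signed_parts :: "nat multiset \<Rightarrow> int set" where
  "signed_parts lam = {k. k = 0 \<or> nat \<bar>k\<bar> \<in># lam}"

lemma minus_mem_signed_parts_iff [simp]: "- k \<in> signed_parts lam \<longleftrightarrow> k \<in> signed_parts lam"
  by (simp add: signed_parts_def)

lemma pos_signed_parts: "{k \<in> signed_parts lam. 0 < k} = int ` (set_mset lam - {0})"
  by (force simp: signed_parts_def image_iff)

lemma signed_parts_split:
  "signed_parts lam = insert 0 ({k \<in> signed_parts lam. 0 < k} \<union> uminus ` {k \<in> signed_parts lam. 0 < k})"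
proof (intro set_eqI iffI)
  fix k assume "k \<in> signed_parts lam"
  then show "k \<in> insert 0 ({k \<in> signed_parts lam. 0 < k} \<union> uminus ` {k \<in> signed_parts lam. 0 < k})"
    by (cases "k = 0"; cases "0 < k") (auto intro!: rev_image_eqI[of "- k"])
qed (auto simp: signed_parts_def)

lemma finite_signed_parts [simp]: "finite (signed_parts lam)"
  by (subst signed_parts_split) (simp add: pos_signed_parts)

lemma sum_signed_parts:
  "(\<Sum>k\<in>signed_parts lam. g k) = g 0 + (\<Sum>k\<in>{k \<in> signed_parts lam. 0 < k}. g k + g (- k))"
proof -
  let ?K = "{k \<in> signed_parts lam. 0 < k}"
  have fin: "finite ?K" by (simp add: pos_signed_parts)
  have "(\<Sum>k\<in>signed_parts lam. g k) = g 0 + (\<Sum>k\<in>?K \<union> uminus ` ?K. g k)"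
    by (subst signed_parts_split, subst sum.insert) (auto simp: fin)
  also have "(\<Sum>k\<in>?K \<union> uminus ` ?K. g k) = (\<Sum>k\<in>?K. g k) + (\<Sum>k\<in>uminus ` ?K. g k)"
    by (rule sum.union_disjoint) (auto simp: fin)
  also have "(\<Sum>k\<in>uminus ` ?K. g k) = (\<Sum>k\<in>?K. g (- k))"
    by (subst sum.reindex) (auto simp: inj_on_def)
  finally show ?thesis by (simp add: sum.distrib)
qed

lemma mem_signed_parts_if_le_count:
  assumes "N \<ge> 1" "N * nat \<bar>k\<bar> \<le> count lam (nat \<bar>k\<bar>)"
  shows "k \<in> signed_parts lam"
proof (cases "k = 0")
  case False
  with assms(1) have "1 \<le> N * nat \<bar>k\<bar>" by simp
  with assms(2) have "count lam (nat \<bar>k\<bar>) > 0" by linarith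
  then show ?thesis by (simp add: signed_parts_def)
qed (simp add: signed_parts_def)

text \<open>The constant term \<open>1\<close> of \<open>t\<^sub>(\<^sub>N\<^sub>)\<close> is the summand \<open>k = 0\<close>, whose condition always holds.\<close>
lemma t_N_eq_sum_signed_parts:
  assumes N: "N \<ge> 1"
  shows "t_N N z lam =
    (\<Sum>k\<in>signed_parts lam. if N * nat \<bar>k\<bar> \<le> count lam (nat \<bar>k\<bar>) then z powi k else 0)"
proof -
  define S where "S = set_mset lam - {0}"
  define c where "c = (\<lambda>m::nat. N * m \<le> count lam m)"
  have "(\<Sum>\<^sub>\<infinity>m\<in>{1::nat..}. (z ^ m + inverse z ^ m) * (if count lam m \<ge> N * m then 1 else 0))
      = (\<Sum>\<^sub>\<infinity>m\<in>S. (z ^ m + inverse z ^ m) * (if c m then 1 else 0))"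
  proof (rule infsum_cong_neutral)
    fix m assume "m \<in> {1..} - S"
    then have "count lam m = 0" "N * m \<ge> 1" using N by (auto simp: S_def not_in_iff)
    then show "(z ^ m + inverse z ^ m) * (if count lam m \<ge> N * m then 1 else 0) = 0" by simp
  qed (auto simp: S_def c_def)
  also have "\<dots> = (\<Sum>m\<in>S. (if c m then z powi int m else 0) + (if c m then z powi (- int m) else 0))"
    unfolding S_def by (simp, intro sum.cong) (auto simp: power_int_minus power_inverse)
  also have "\<dots> = (\<Sum>k\<in>{k \<in> signed_parts lam. 0 < k}.
      (if c (nat \<bar>k\<bar>) then z powi k else 0) + (if c (nat \<bar>- k\<bar>) then z powi (- k) else 0))"
    by (simp add: pos_signed_parts S_def sum.reindex)
  finally show ?thesis
    by (simp add: t_N_def sum_signed_parts c_def)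
qed

text \<open>The least \<open>\<lambda>\<close> with \<open>r\<^bsub>|m a|\<^esub>(\<lambda>) \<ge> N a \<cdot> |m a|\<close> for all \<open>a \<in> A\<close>: at each part size \<open>k\<close> the
  largest of these demands.\<close>
definition threshold :: "(nat \<Rightarrow> nat) \<Rightarrow> nat set \<Rightarrow> (nat \<Rightarrow> int) \<Rightarrow> nat multiset" where
  "threshold N A m = (\<Sum>k\<in>(\<lambda>a. nat \<bar>m a\<bar>) ` A.
      replicate_mset (Max ((\<lambda>a. N a * k) ` {a\<in>A. nat \<bar>m a\<bar> = k})) k)"

lemma count_threshold:
  assumes "finite A"
  shows "count (threshold N A m) k = (if k \<in> (\<lambda>a. nat \<bar>m a\<bar>) ` A
     then Max ((\<lambda>a. N a * k) ` {a\<in>A. nat \<bar>m a\<bar> = k}) else 0)"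
proof -
  have "count (threshold N A m) k = (\<Sum>k'\<in>(\<lambda>a. nat \<bar>m a\<bar>) ` A.
      if k' = k then Max ((\<lambda>a. N a * k') ` {a\<in>A. nat \<bar>m a\<bar> = k'}) else 0)"
    unfolding threshold_def count_sum by (intro sum.cong) auto
  also have "\<dots> = (if k \<in> (\<lambda>a. nat \<bar>m a\<bar>) ` A
     then Max ((\<lambda>a. N a * k) ` {a\<in>A. nat \<bar>m a\<bar> = k}) else 0)"
    using assms by (simp add: sum.delta)
  finally show ?thesis .
qed

lemma threshold_subseteq_iff:
  assumes "finite A"
  shows "threshold N A m \<subseteq># lam \<longleftrightarrow> (\<forall>a\<in>A. N a * nat \<bar>m a\<bar> \<le> count lam (nat \<bar>m a\<bar>))"
proof
  assume le: "threshold N A m \<subseteq># lam"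
  show "\<forall>a\<in>A. N a * nat \<bar>m a\<bar> \<le> count lam (nat \<bar>m a\<bar>)"
  proof
    fix a assume a: "a \<in> A"
    let ?k = "nat \<bar>m a\<bar>"
    have "N a * ?k \<le> Max ((\<lambda>a. N a * ?k) ` {b\<in>A. nat \<bar>m b\<bar> = ?k})"
      using a assms by (intro Max_ge) auto
    also have "\<dots> = count (threshold N A m) ?k" using a assms by (simp add: count_threshold)
    also have "\<dots> \<le> count lam ?k" using le by (simp add: subseteq_mset_def)
    finally show "N a * ?k \<le> count lam ?k" .
  qed
next
  assume le: "\<forall>a\<in>A. N a * nat \<bar>m a\<bar> \<le> count lam (nat \<bar>m a\<bar>)"
  show "threshold N A m \<subseteq># lam"
    unfolding subseteq_mset_def
  proof
    fix k
    show "count (threshold N A m) k \<le> count lam k"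
    proof (cases "k \<in> (\<lambda>a. nat \<bar>m a\<bar>) ` A")
      case True
      then have "Max ((\<lambda>a. N a * k) ` {a\<in>A. nat \<bar>m a\<bar> = k}) \<le> count lam k"
        using assms le by (subst Max_le_iff) auto
      then show ?thesis using True assms by (simp add: count_threshold)
    qed (simp add: count_threshold assms)
  qed
qed

lemma zero_not_in_threshold: "finite A \<Longrightarrow> 0 \<notin># threshold N A m"
  by (simp add: count_threshold flip: count_eq_zero_iff) (auto intro: Max_eqI)

lemma threshold_cong: "(\<And>a. a \<in> A \<Longrightarrow> m a = m' a) \<Longrightarrow> threshold N A m = threshold N A m'"
  unfolding threshold_def
  by (intro sum.cong image_cong refl arg_cong2[where f=replicate_mset] arg_cong[where f=Max]) auto

lemma threshold_empty [simp]: "threshold N {} m = {#}"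
  by (simp add: threshold_def)

lemma threshold_split:
  assumes "finite A"
  shows "threshold N A m =
    threshold N (A \<inter> {a. nat \<bar>m a\<bar> = k}) m + threshold N (A - {a. nat \<bar>m a\<bar> = k}) m"
proof (rule multiset_eqI)
  fix x
  define P where "P = {a. nat \<bar>m a\<bar> = k}"
  have "finite (A \<inter> P)" "finite (A - P)" using assms by auto
  moreover have "{a\<in>A. nat \<bar>m a\<bar> = x} = {a\<in>A \<inter> P. nat \<bar>m a\<bar> = x}" if "x = k"
    using that by (auto simp: P_def)
  moreover have "{a\<in>A. nat \<bar>m a\<bar> = x} = {a\<in>A - P. nat \<bar>m a\<bar> = x}" if "x \<noteq> k"
    using that by (auto simp: P_def)
  ultimately show "count (threshold N A m) x = count (threshold N (A \<inter> P) m + threshold N (A - P) m) x"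
    using assms by (cases "x = k") (auto simp: count_threshold P_def)
qed

lemma threshold_uniform:
  assumes "finite A" "A \<noteq> {}" "\<And>a. a \<in> A \<Longrightarrow> nat \<bar>m a\<bar> = k"
  shows "threshold N A m = replicate_mset (k * Max (N ` A)) k"
proof -
  have "(\<lambda>a. nat \<bar>m a\<bar>) ` A = {k}" "{a\<in>A. nat \<bar>m a\<bar> = k} = A"
    using assms by auto
  moreover have "Max ((\<lambda>a. N a * k) ` A) = k * Max (N ` A)"
  proof -
    have "k * Max (N ` A) = Max ((\<lambda>x. k * x) ` N ` A)"
      using assms by (intro mono_Max_commute) (auto intro: monoI)
    also have "(\<lambda>x. k * x) ` N ` A = (\<lambda>a. N a * k) ` A" by (auto simp: image_image mult.commute)
    finally show ?thesis by simp
  qed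
  ultimately show ?thesis by (simp add: threshold_def)
qed

lemma threshold_subseteq_PiE:
  assumes "finite A" "\<And>a. a \<in> A \<Longrightarrow> N a \<ge> 1"
  shows "{m\<in>PiE A (\<lambda>_. UNIV). threshold N A m \<subseteq># lam} =
    {m\<in>PiE A (\<lambda>_. signed_parts lam). \<forall>a\<in>A. N a * nat \<bar>m a\<bar> \<le> count lam (nat \<bar>m a\<bar>)}"
proof -
  have "m a \<in> signed_parts lam"
    if "a \<in> A" "N a * nat \<bar>m a\<bar> \<le> count lam (nat \<bar>m a\<bar>)" for m a
    using that assms(2) mem_signed_parts_if_le_count by blast
  then show ?thesis using threshold_subseteq_iff[OF assms(1)] by (auto simp: PiE_iff)
qed

lemma finite_threshold_subseteq:
  assumes "finite A" "\<And>a. a \<in> A \<Longrightarrow> N a \<ge> 1"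
  shows "finite {m\<in>PiE A (\<lambda>_. UNIV). threshold N A m \<subseteq># lam}"
proof (rule finite_subset)
  show "{m\<in>PiE A (\<lambda>_. UNIV). threshold N A m \<subseteq># lam} \<subseteq> PiE A (\<lambda>_. signed_parts lam)"
    by (subst threshold_subseteq_PiE[OF assms]) auto
qed (auto intro: finite_PiE assms)

lemma prod_t_N_eq_sum:
  assumes fin: "finite A" and N: "\<And>a. a \<in> A \<Longrightarrow> N a \<ge> 1"
  shows "(\<Prod>a\<in>A. t_N (N a) (\<zeta> a) lam) =
     (\<Sum>m\<in>{m\<in>PiE A (\<lambda>_. UNIV). threshold N A m \<subseteq># lam}. \<Prod>a\<in>A. \<zeta> a powi m a)"
proof -
  define c where "c = (\<lambda>a k. N a * nat \<bar>k\<bar> \<le> count lam (nat \<bar>k::int\<bar>))"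
  have "(\<Prod>a\<in>A. t_N (N a) (\<zeta> a) lam) =
      (\<Prod>a\<in>A. \<Sum>k\<in>signed_parts lam. if c a k then \<zeta> a powi k else 0)"
    using N by (intro prod.cong refl) (simp add: t_N_eq_sum_signed_parts c_def)
  also have "\<dots> = (\<Sum>m\<in>PiE A (\<lambda>_. signed_parts lam). \<Prod>a\<in>A. if c a (m a) then \<zeta> a powi m a else 0)"
    by (rule prod_sum_PiE[OF fin]) simp
  also have "\<dots> = (\<Sum>m\<in>PiE A (\<lambda>_. signed_parts lam).
      if \<forall>a\<in>A. c a (m a) then \<Prod>a\<in>A. \<zeta> a powi m a else 0)"
    using fin by (intro sum.cong refl) auto
  also have "\<dots> = (\<Sum>m\<in>{m\<in>PiE A (\<lambda>_. signed_parts lam). \<forall>a\<in>A. c a (m a)}. \<Prod>a\<in>A. \<zeta> a powi m a)"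
    by (rule sum.inter_filter[symmetric]) (auto intro!: finite_PiE fin)
  also have "{m\<in>PiE A (\<lambda>_. signed_parts lam). \<forall>a\<in>A. c a (m a)} =
      {m\<in>PiE A (\<lambda>_. UNIV). threshold N A m \<subseteq># lam}"
    by (simp only: threshold_subseteq_PiE[OF fin N] c_def)
  finally show ?thesis .
qed

lemma ubracket_prod_t_N:
  assumes "finite A" "\<And>a. a \<in> A \<Longrightarrow> N a \<ge> 1"
  shows "ubracket (\<lambda>lam. \<Prod>a\<in>A. t_N (N a) (\<zeta> a) lam) =
         mono_series (\<lambda>m. \<Prod>a\<in>A. \<zeta> a powi m a) (threshold N A) (PiE A (\<lambda>_. UNIV))"
  by (rule ubracket_eq_mono_series)
     (auto simp: zero_not_in_threshold assms finite_threshold_subseteq[OF assms] prod_t_N_eq_sum[OF assms])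

section \<open>Amalgams and the vanishing of cumulants\<close>

definition trace_blocks :: "'a set \<Rightarrow> 'a set set \<Rightarrow> 'a set set" where
  "trace_blocks S \<alpha> = (\<inter>) S ` \<alpha> - {{}}"

lemma trace_blocks_insert:
  "trace_blocks S (insert A \<beta>) =
    (if S \<inter> A = {} then trace_blocks S \<beta> else insert (S \<inter> A) (trace_blocks S \<beta>))"
  by (auto simp: trace_blocks_def)

lemma trace_blocks_cong:
  "(\<And>A. A \<in> \<beta> \<Longrightarrow> S \<inter> A = S' \<inter> A) \<Longrightarrow> trace_blocks S \<beta> = trace_blocks S' \<beta>"
  by (auto simp: trace_blocks_def image_def)

lemma not_mem_trace_blocks:
  "X \<noteq> {} \<Longrightarrow> X \<subseteq> A \<Longrightarrow> (\<And>A'. A' \<in> \<beta> \<Longrightarrow> A' \<inter> A = {}) \<Longrightarrow> X \<notin> trace_blocks S \<beta>"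
  by (auto simp: trace_blocks_def)

lemma trace_blocks_empty [simp]: "trace_blocks {} \<alpha> = {}"
  by (auto simp: trace_blocks_def)

lemma trace_blocks_Union: "{} \<notin> \<alpha> \<Longrightarrow> trace_blocks (\<Union>\<alpha>) \<alpha> = \<alpha>"
proof -
  have "(\<inter>) (\<Union>\<alpha>) ` \<alpha> = (\<lambda>A. A) ` \<alpha>" by (intro image_cong) auto
  then show "{} \<notin> \<alpha> \<Longrightarrow> trace_blocks (\<Union>\<alpha>) \<alpha> = \<alpha>" by (simp add: trace_blocks_def)
qed

lemma sum_trace_blocks:
  fixes h :: "'a set \<Rightarrow> 'b::comm_monoid_add"
  assumes "disjoint \<alpha>" "finite \<alpha>" "h {} = 0"
  shows "(\<Sum>A\<in>\<alpha>. h (S \<inter> A)) = (\<Sum>B\<in>trace_blocks S \<alpha>. h B)"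
proof -
  have "(\<Sum>B\<in>(\<inter>) S ` \<alpha>. h B) = (\<Sum>A\<in>\<alpha>. h (S \<inter> A))"
  proof (subst sum.reindex_nontrivial[OF assms(2)])
    fix A A' assume "A \<in> \<alpha>" "A' \<in> \<alpha>" "A \<noteq> A'" "S \<inter> A = S \<inter> A'"
    then have "S \<inter> A = {}" using assms(1) unfolding disjoint_def disjnt_def by blast
    then show "h (S \<inter> A) = 0" using assms(3) by simp
  qed simp
  moreover have "(\<Sum>B\<in>(\<inter>) S ` \<alpha>. h B) = (\<Sum>B\<in>trace_blocks S \<alpha>. h B)"
    unfolding trace_blocks_def using assms(2,3) by (intro sum.mono_neutral_right) auto
  ultimately show ?thesis by simp
qed

lemma sum_blocks_split:
  fixes h :: "'a set \<Rightarrow> 'b::comm_monoid_add"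
  assumes part: "partition_on I \<alpha>" and "finite I" "h {} = 0"
    and additive: "\<And>A. A \<subseteq> I \<Longrightarrow> h A = h (P \<inter> A) + h ((I - P) \<inter> A)"
  shows "(\<Sum>A\<in>\<alpha>. h A) = (\<Sum>B\<in>trace_blocks P \<alpha>. h B) + (\<Sum>B\<in>trace_blocks (I - P) \<alpha>. h B)"
proof -
  have "finite \<alpha>" using finite_elements[OF \<open>finite I\<close> part] .
  have "(\<Sum>A\<in>\<alpha>. h A) = (\<Sum>A\<in>\<alpha>. h (P \<inter> A) + h ((I - P) \<inter> A))"
    using part additive by (intro sum.cong refl) (auto simp: partition_on_def)
  also have "\<dots> = (\<Sum>A\<in>\<alpha>. h (P \<inter> A)) + (\<Sum>A\<in>\<alpha>. h ((I - P) \<inter> A))"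
    by (rule sum.distrib)
  finally show ?thesis
    using part \<open>finite \<alpha>\<close> \<open>h {} = 0\<close> by (simp add: sum_trace_blocks partition_on_def)
qed

text \<open>Amalgams of \<open>p\<close> and \<open>q\<close> are the set partitions \<open>\<alpha>\<close> of \<open>\<Union>p \<union> \<Union>q\<close> with \<open>\<alpha> \<and> {\<Union>p, \<Union>q} = p \<union> q\<close>.\<close>
definition amalgams :: "'a set set \<Rightarrow> 'a set set \<Rightarrow> 'a set set set" where
  "amalgams p q = {\<alpha>. partition_on (\<Union>p \<union> \<Union>q) \<alpha> \<and> trace_blocks (\<Union>p) \<alpha> = p \<and> trace_blocks (\<Union>q) \<alpha> = q}"

definition separated :: "'a set set \<Rightarrow> 'a set set \<Rightarrow> bool" where
  "separated p q \<longleftrightarrow> finite p \<and> finite q \<and> (\<forall>b\<in>p \<union> q. finite b) \<and> disjoint p \<and> disjoint q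
     \<and> {} \<notin> p \<and> {} \<notin> q \<and> \<Union>p \<inter> \<Union>q = {}"

lemma separated_subset: "separated p q \<Longrightarrow> p' \<subseteq> p \<Longrightarrow> q' \<subseteq> q \<Longrightarrow> separated p' q'"
  unfolding separated_def by (auto intro: finite_subset pairwise_subset) blast

lemma separated_insertD:
  assumes "separated (insert b p) q" "b \<notin> p"
  shows "b \<inter> \<Union>p = {}" "b \<inter> \<Union>q = {}" "b \<noteq> {}" "\<Union>p \<inter> \<Union>q = {}"
  using assms unfolding separated_def disjoint_def by (auto simp: disjnt_def)

lemma separated_partitions:
  assumes "partition_on P p" "partition_on Q q" "finite P" "finite Q" "P \<inter> Q = {}"
  shows "separated p q"
proof -
  have "finite p" "finite q" using assms finite_elements by blast+
  moreover have "\<forall>b\<in>p \<union> q. finite b"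
    using assms unfolding partition_on_def by (auto intro: finite_subset)
  ultimately show ?thesis using assms unfolding separated_def partition_on_def by blast
qed

lemma finite_amalgams: "separated p q \<Longrightarrow> finite (amalgams p q)"
  by (rule finite_subset[of _ "Pow (Pow (\<Union>p \<union> \<Union>q))"])
     (auto simp: amalgams_def partition_on_def separated_def)

lemma finite_amalgam: "separated p q \<Longrightarrow> \<beta> \<in> amalgams p q \<Longrightarrow> finite \<beta>"
  by (rule finite_subset[of _ "Pow (\<Union>p \<union> \<Union>q)"])
     (auto simp: amalgams_def partition_on_def separated_def)

lemma insert_mem_amalgams:
  assumes sep: "separated (insert b p) q" and b: "b \<notin> p" and \<beta>: "\<beta> \<in> amalgams p q"
  shows "insert b \<beta> \<in> amalgams (insert b p) q"
proof -
  note b_facts = separated_insertD[OF sep b]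
  from \<beta> have part: "partition_on (\<Union>p \<union> \<Union>q) \<beta>"
    and tp: "trace_blocks (\<Union>p) \<beta> = p" and tq: "trace_blocks (\<Union>q) \<beta> = q"
    by (auto simp: amalgams_def)
  have U: "\<Union>\<beta> = \<Union>p \<union> \<Union>q" using part by (simp add: partition_on_def)
  have part': "partition_on (\<Union>(insert b p) \<union> \<Union>q) (insert b \<beta>)"
  proof (subst partition_on_insert)
    show "disjnt b (\<Union>\<beta>)" using U b_facts by (auto simp: disjnt_def)
    have "\<Union>(insert b p) \<union> \<Union>q - b = \<Union>p \<union> \<Union>q" using b_facts by auto
    then show "partition_on (\<Union>(insert b p) \<union> \<Union>q - b) \<beta> \<and> b \<subseteq> \<Union>(insert b p) \<union> \<Union>q \<and> b \<noteq> {}"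
      using part b_facts by auto
  qed
  have "\<Union>(insert b p) \<inter> A = \<Union>p \<inter> A" if "A \<in> \<beta>" for A
    using that U b_facts(1,2) by blast
  then have tp': "trace_blocks (\<Union>(insert b p)) \<beta> = p"
    using tp trace_blocks_cong by metis
  have "\<Union>(insert b p) \<inter> b = b" "\<Union>q \<inter> b = {}"
    using b_facts by auto
  then have "trace_blocks (\<Union>(insert b p)) (insert b \<beta>) = insert b p"
    "trace_blocks (\<Union>q) (insert b \<beta>) = q"
    using tp' tq b_facts(3) by (simp_all add: trace_blocks_insert)
  with part' show ?thesis by (simp add: amalgams_def)
qed

lemma insert_Un_mem_amalgams:
  assumes sep: "separated (insert b p) q" and b: "b \<notin> p" and c: "c \<in> q"
    and \<beta>: "\<beta> \<in> amalgams p (q - {c})"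
  shows "insert (b \<union> c) \<beta> \<in> amalgams (insert b p) q"
proof -
  note b_facts = separated_insertD[OF sep b]
  have "c \<noteq> {}" using sep c by (auto simp: separated_def)
  have Uq: "\<Union>(q - {c}) = \<Union>q - c"
    using sep c by (simp add: separated_def diff_Union_pairwise_disjoint[symmetric])
  from \<beta> have part: "partition_on (\<Union>p \<union> (\<Union>q - c)) \<beta>"
    and tp: "trace_blocks (\<Union>p) \<beta> = p" and tq: "trace_blocks (\<Union>q - c) \<beta> = q - {c}"
    by (auto simp: amalgams_def Uq)
  have U: "\<Union>\<beta> = \<Union>p \<union> (\<Union>q - c)" using part by (simp add: partition_on_def)
  have "c \<subseteq> \<Union>q" using c by auto
  have part': "partition_on (\<Union>(insert b p) \<union> \<Union>q) (insert (b \<union> c) \<beta>)"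
  proof (subst partition_on_insert)
    show "disjnt (b \<union> c) (\<Union>\<beta>)" using U b_facts \<open>c \<subseteq> \<Union>q\<close> by (auto simp: disjnt_def)
    have "\<Union>(insert b p) \<union> \<Union>q - (b \<union> c) = \<Union>p \<union> (\<Union>q - c)" using b_facts \<open>c \<subseteq> \<Union>q\<close> by auto
    then show "partition_on (\<Union>(insert b p) \<union> \<Union>q - (b \<union> c)) \<beta> \<and>
        b \<union> c \<subseteq> \<Union>(insert b p) \<union> \<Union>q \<and> b \<union> c \<noteq> {}"
      using part b_facts \<open>c \<subseteq> \<Union>q\<close> by auto
  qed
  have sub: "A \<subseteq> \<Union>p \<union> (\<Union>q - c)" if "A \<in> \<beta>" for A
    using that U by blast
  have "\<Union>(insert b p) \<inter> A = \<Union>p \<inter> A" if "A \<in> \<beta>" for A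
    using sub[OF that] b_facts(1,2) by blast
  then have tp': "trace_blocks (\<Union>(insert b p)) \<beta> = p"
    using tp trace_blocks_cong by metis
  have "\<Union>q \<inter> A = (\<Union>q - c) \<inter> A" if "A \<in> \<beta>" for A
    using sub[OF that] b_facts(4) by blast
  then have tq': "trace_blocks (\<Union>q) \<beta> = q - {c}"
    using tq trace_blocks_cong by metis
  have "\<Union>(insert b p) \<inter> (b \<union> c) = b" "\<Union>q \<inter> (b \<union> c) = c"
    using b_facts \<open>c \<subseteq> \<Union>q\<close> by auto
  then have "trace_blocks (\<Union>(insert b p)) (insert (b \<union> c) \<beta>) = insert b p"
    "trace_blocks (\<Union>q) (insert (b \<union> c) \<beta>) = q"
    using tp' tq' b_facts(3) c \<open>c \<noteq> {}\<close> by (simp_all add: trace_blocks_insert insert_absorb)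
  with part' show ?thesis by (simp add: amalgams_def)
qed

lemma amalgams_insertE:
  assumes sep: "separated (insert b p) q" and b: "b \<notin> p" and \<alpha>: "\<alpha> \<in> amalgams (insert b p) q"
  obtains (own_block) \<beta> where "\<beta> \<in> amalgams p q" "\<alpha> = insert b \<beta>"
    | (merged) c \<beta> where "c \<in> q" "\<beta> \<in> amalgams p (q - {c})" "\<alpha> = insert (b \<union> c) \<beta>"
proof -
  note b_facts = separated_insertD[OF sep b]
  define P where "P = b \<union> \<Union>p"
  from \<alpha> have part: "partition_on (P \<union> \<Union>q) \<alpha>" and tp: "trace_blocks P \<alpha> = insert b p"
    and tq: "trace_blocks (\<Union>q) \<alpha> = q"
    by (auto simp: amalgams_def P_def)
  have "b \<in> trace_blocks P \<alpha>" using tp by simp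
  then obtain A where A: "A \<in> \<alpha>" "P \<inter> A = b"
    by (auto simp: trace_blocks_def)
  define c where "c = \<Union>q \<inter> A"
  have "c \<subseteq> \<Union>q" by (simp add: c_def)
  define \<beta> where "\<beta> = \<alpha> - {A}"
  have \<alpha>_eq: "\<alpha> = insert A \<beta>" using A by (auto simp: \<beta>_def)
  have A_eq: "A = b \<union> c"
  proof -
    have "A \<subseteq> P \<union> \<Union>q" using part A(1) by (auto simp: partition_on_def)
    then show ?thesis using A(2) unfolding c_def by blast
  qed
  have disj: "A' \<inter> A = {}" if "A' \<in> \<beta>" for A'
    using part A that unfolding \<beta>_def partition_on_def disjoint_def disjnt_def by blast
  have part_\<beta>: "partition_on (P \<union> \<Union>q - A) \<beta>"
    using part disj unfolding \<alpha>_eq by (subst (asm) partition_on_insert) (auto simp: disjnt_def)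
  have "trace_blocks P \<beta> = trace_blocks (\<Union>p) \<beta>"
    using disj A_eq by (intro trace_blocks_cong) (auto simp: P_def)
  moreover have "b \<notin> trace_blocks P \<beta>"
    using b_facts(3) A_eq disj by (intro not_mem_trace_blocks) auto
  ultimately have tp_\<beta>: "trace_blocks (\<Union>p) \<beta> = p"
    using tp A(2) b_facts(3) b unfolding \<alpha>_eq trace_blocks_insert by (auto simp: insert_ident)
  show thesis
  proof (cases "c = {}")
    case True
    then have "trace_blocks (\<Union>q) \<beta> = q"
      using tq unfolding \<alpha>_eq trace_blocks_insert by (simp add: c_def)
    moreover have "P \<union> \<Union>q - A = \<Union>p \<union> \<Union>q"
      using True A_eq b_facts by (auto simp: P_def)
    ultimately have "\<beta> \<in> amalgams p q"
      using part_\<beta> tp_\<beta> by (simp add: amalgams_def)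
    then show thesis using own_block \<alpha>_eq A_eq True by simp
  next
    case False
    have "c \<notin> trace_blocks (\<Union>q) \<beta>"
      using False A_eq disj by (intro not_mem_trace_blocks) auto
    then have "c \<in> q" and tq_\<beta>: "trace_blocks (\<Union>q) \<beta> = q - {c}"
      using tq False unfolding \<alpha>_eq trace_blocks_insert by (auto simp: c_def)
    have Uq: "\<Union>(q - {c}) = \<Union>q - c"
      using sep \<open>c \<in> q\<close> by (simp add: separated_def diff_Union_pairwise_disjoint[symmetric])
    have "trace_blocks (\<Union>q - c) \<beta> = trace_blocks (\<Union>q) \<beta>"
      using disj A_eq by (intro trace_blocks_cong) auto
    moreover have "P \<union> \<Union>q - A = \<Union>p \<union> \<Union>(q - {c})"
      using A_eq b_facts Uq \<open>c \<subseteq> \<Union>q\<close> by (auto simp: P_def)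
    ultimately have "\<beta> \<in> amalgams p (q - {c})"
      using part_\<beta> tp_\<beta> tq_\<beta> Uq by (simp add: amalgams_def)
    then show thesis using merged \<open>c \<in> q\<close> \<alpha>_eq A_eq by simp
  qed
qed

lemma amalgams_empty:
  assumes "separated {} q"
  shows "amalgams {} q = {q}"
proof -
  have "\<alpha> = q" if "\<alpha> \<in> amalgams {} q" for \<alpha>
  proof -
    from that have "partition_on (\<Union>q) \<alpha>" "trace_blocks (\<Union>q) \<alpha> = q"
      by (simp_all add: amalgams_def)
    then show ?thesis using trace_blocks_Union[of \<alpha>] by (simp add: partition_on_def)
  qed
  moreover have "partition_on (\<Union>q) q" "{} \<notin> q"
    using assms by (simp_all add: partition_on_def separated_def)
  ultimately show ?thesis using trace_blocks_Union[of q] by (auto simp: amalgams_def)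
qed

lemma block_not_subset_amalgam_block:
  assumes "separated (insert b p) q" "b \<notin> p" "q' \<subseteq> q" "\<beta> \<in> amalgams p q'" "D \<in> \<beta>"
  shows "\<not> b \<subseteq> D"
proof -
  have "D \<subseteq> \<Union>p \<union> \<Union>q'" using assms(4,5) by (auto simp: amalgams_def partition_on_def)
  then show ?thesis using separated_insertD[OF assms(1,2)] assms(3) by blast
qed

lemma amalgams_insert:
  assumes "separated (insert b p) q" "b \<notin> p"
  shows "amalgams (insert b p) q =
    insert b ` amalgams p q \<union> (\<Union>c\<in>q. insert (b \<union> c) ` amalgams p (q - {c}))"
proof (intro equalityI subsetI)
  fix \<alpha> assume "\<alpha> \<in> amalgams (insert b p) q"
  then show "\<alpha> \<in> insert b ` amalgams p q \<union> (\<Union>c\<in>q. insert (b \<union> c) ` amalgams p (q - {c}))"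
    by (cases rule: amalgams_insertE[OF assms]) auto
qed (auto intro: insert_mem_amalgams[OF assms] insert_Un_mem_amalgams[OF assms])

lemma sum_amalgams_insert:
  assumes sep: "separated (insert b p) q" and b: "b \<notin> p"
  shows "(\<Sum>\<alpha>\<in>amalgams (insert b p) q. h \<alpha>) =
    (\<Sum>\<beta>\<in>amalgams p q. h (insert b \<beta>)) + (\<Sum>c\<in>q. \<Sum>\<beta>\<in>amalgams p (q - {c}). h (insert (b \<union> c) \<beta>))"
proof -
  define S where "S c = insert (b \<union> c) ` amalgams p (q - {c})" for c
  have "finite q" "{} \<notin> q" using sep by (simp_all add: separated_def)
  have disj_b: "b \<inter> c = {}" if "c \<in> insert {} q" for c
    using that separated_insertD(2)[OF sep b] by auto
  have no_b: "\<not> b \<subseteq> D" if "\<beta> \<in> amalgams p (q - {c})" "D \<in> \<beta>" for \<beta> c D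
    using block_not_subset_amalgam_block[OF sep b _ that] by blast
  have inj: "inj_on (insert (b \<union> c)) (amalgams p (q - {c}))" for c
    by (auto intro!: inj_onI simp: insert_ident dest: no_b)
  have disj: "S c \<inter> S c' = {}" if "c \<in> insert {} q" "c' \<in> insert {} q" "c \<noteq> c'" for c c'
  proof -
    have False if "\<beta>' \<in> amalgams p (q - {c'})" "insert (b \<union> c) \<beta> = insert (b \<union> c') \<beta>'" for \<beta> \<beta>'
    proof -
      have "b \<union> c \<in> insert (b \<union> c') \<beta>'" using that(2) by blast
      moreover have "b \<union> c \<notin> \<beta>'" using no_b[OF that(1)] by blast
      ultimately have "b \<union> c = b \<union> c'" by blast
      then show False using disj_b \<open>c \<in> insert {} q\<close> \<open>c' \<in> insert {} q\<close> \<open>c \<noteq> c'\<close> by blast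
    qed
    then show ?thesis by (auto simp: S_def)
  qed
  have "finite (S c)" for c
    using finite_amalgams[OF separated_subset[OF sep subset_insertI Diff_subset]] by (simp add: S_def)
  then have "(\<Sum>\<alpha>\<in>(\<Union>c\<in>insert {} q. S c). h \<alpha>) = (\<Sum>c\<in>insert {} q. \<Sum>\<alpha>\<in>S c. h \<alpha>)"
    using \<open>finite q\<close> disj by (intro sum.UNION_disjoint) auto
  moreover have "amalgams (insert b p) q = (\<Union>c\<in>insert {} q. S c)"
    using amalgams_insert[OF sep b] \<open>{} \<notin> q\<close> by (simp add: S_def)
  ultimately have "(\<Sum>\<alpha>\<in>amalgams (insert b p) q. h \<alpha>) = (\<Sum>c\<in>insert {} q. \<Sum>\<alpha>\<in>S c. h \<alpha>)"
    by simp
  also have "\<dots> = (\<Sum>\<alpha>\<in>S {}. h \<alpha>) + (\<Sum>c\<in>q. \<Sum>\<alpha>\<in>S c. h \<alpha>)"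
    using \<open>finite q\<close> \<open>{} \<notin> q\<close> by simp
  finally have "(\<Sum>\<alpha>\<in>amalgams (insert b p) q. h \<alpha>) = (\<Sum>\<alpha>\<in>S {}. h \<alpha>) + (\<Sum>c\<in>q. \<Sum>\<alpha>\<in>S c. h \<alpha>)" .
  moreover have "inj_on (insert b) (amalgams p q)" using inj[of "{}"] \<open>{} \<notin> q\<close> by simp
  ultimately show ?thesis
    using \<open>{} \<notin> q\<close> by (simp add: S_def sum.reindex inj)
qed

definition mob_weight :: "nat \<Rightarrow> int" where
  "mob_weight n = (-1) ^ (n + 1) * fact (n - 1)"

text \<open>Closed form of \<open>\<Sum>\<^sub>\<alpha> mob_weight (|\<alpha>| + k)\<close> over the amalgams of a \<open>p\<close>-block and a
  \<open>q\<close>-block family (merging \<open>j\<close> pairs in \<open>C(p,j) C(q,j) j!\<close> ways).\<close>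
definition amalgam_weight :: "nat \<Rightarrow> nat \<Rightarrow> nat \<Rightarrow> int" where
  "amalgam_weight k p q = (-1) ^ (p + q + k + 1) * fact (q + k - 1) * pochhammer (int k) p"

lemma amalgam_weight_Suc:
  assumes "k + q \<ge> 1"
  shows "amalgam_weight k (Suc p) q = amalgam_weight (k + 1) p q + int q * amalgam_weight (k + 1) p (q - 1)"
proof (cases q)
  case 0
  then obtain k' where "k = Suc k'" using assms by (cases k) auto
  then show ?thesis unfolding amalgam_weight_def 0 by (simp add: pochhammer_rec algebra_simps)
next
  case (Suc q')
  have "amalgam_weight (k + 1) p q + int q * amalgam_weight (k + 1) p (q - 1) =
     (-1) ^ (p + q' + k + 1) * pochhammer (int k + 1) p * fact (q' + k) * (int (q' + k + 1) - int (q' + 1))"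
    unfolding amalgam_weight_def Suc by (simp add: algebra_simps fact_Suc[of "q' + k", simplified])
  also have "\<dots> = amalgam_weight k (Suc p) q"
    unfolding amalgam_weight_def Suc by (simp add: pochhammer_rec algebra_simps)
  finally show ?thesis ..
qed

lemma sum_amalgams_mob_weight:
  assumes "finite p"
  shows "separated p q \<Longrightarrow> k + card q \<ge> 1 \<Longrightarrow>
    (\<Sum>\<alpha>\<in>amalgams p q. mob_weight (card \<alpha> + k)) = amalgam_weight k (card p) (card q)"
  using assms
proof (induction p arbitrary: q k rule: finite_induct)
  case empty
  then show ?case by (simp add: amalgams_empty mob_weight_def amalgam_weight_def algebra_simps)
next
  case (insert b p)
  note sep = insert.prems(1)
  have "finite q" using sep by (simp add: separated_def)
  have sep': "separated p q" "separated p (q - {c})" for c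
    using sep by (auto elim: separated_subset)
  have card_insert: "card (insert D \<beta>) = card \<beta> + 1"
    if "\<beta> \<in> amalgams p q'" "q' \<subseteq> q" "b \<subseteq> D" for \<beta> q' D
  proof -
    have "finite \<beta>"
      using finite_amalgam[OF separated_subset[OF sep subset_insertI that(2)] that(1)] .
    moreover have "D \<notin> \<beta>"
      using block_not_subset_amalgam_block[OF sep insert.hyps(2) that(2,1)] that(3) by blast
    ultimately show ?thesis by simp
  qed
  have IH: "(\<Sum>\<beta>\<in>amalgams p q. mob_weight (card \<beta> + (k + 1))) = amalgam_weight (k + 1) (card p) (card q)"
    by (rule insert.IH[OF sep'(1)]) simp
  have IH_Diff: "(\<Sum>\<beta>\<in>amalgams p (q - {c}). mob_weight (card \<beta> + (k + 1))) =
      amalgam_weight (k + 1) (card p) (card q - 1)" if "c \<in> q" for c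
    using insert.IH[OF sep'(2), of "k + 1" c] that \<open>finite q\<close> by simp
  have "(\<Sum>\<alpha>\<in>amalgams (insert b p) q. mob_weight (card \<alpha> + k)) =
      (\<Sum>\<beta>\<in>amalgams p q. mob_weight (card (insert b \<beta>) + k)) +
      (\<Sum>c\<in>q. \<Sum>\<beta>\<in>amalgams p (q - {c}). mob_weight (card (insert (b \<union> c) \<beta>) + k))"
    by (rule sum_amalgams_insert[OF sep insert.hyps(2)])
  also have "\<dots> = (\<Sum>\<beta>\<in>amalgams p q. mob_weight (card \<beta> + (k + 1))) +
      (\<Sum>c\<in>q. \<Sum>\<beta>\<in>amalgams p (q - {c}). mob_weight (card \<beta> + (k + 1)))"
    using card_insert[of _ q b] card_insert[of _ "q - {_}" "b \<union> _"]
    by (intro arg_cong2[where f = "(+)"] sum.cong refl) auto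
  also have "\<dots> = amalgam_weight (k + 1) (card p) (card q) +
      (\<Sum>c\<in>q. amalgam_weight (k + 1) (card p) (card q - 1))"
    by (simp only: IH sum.cong[OF refl IH_Diff])
  also have "\<dots> = amalgam_weight (k + 1) (card p) (card q) +
      int (card q) * amalgam_weight (k + 1) (card p) (card q - 1)"
    by simp
  also have "\<dots> = amalgam_weight k (card (insert b p)) (card q)"
    using amalgam_weight_Suc[of k "card q" "card p"] insert.prems(2) insert.hyps by simp
  finally show ?case .
qed

lemma sum_amalgams_mob_weight_eq_0:
  assumes "separated p q" "p \<noteq> {}" "q \<noteq> {}"
  shows "(\<Sum>\<alpha>\<in>amalgams p q. mob_weight (card \<alpha>)) = 0"
proof -
  have "finite p" "finite q" using assms(1) by (auto simp: separated_def)
  then obtain n where "card p = Suc n" "card q \<ge> 1"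
    using assms by (metis card_0_eq not0_implies_Suc less_one not_le)
  then show ?thesis
    using sum_amalgams_mob_weight[OF \<open>finite p\<close> assms(1), of 0] by (simp add: amalgam_weight_def pochhammer_rec)
qed

text \<open>The cumulant of additive data vanishes: group the partitions \<open>\<alpha>\<close> of \<open>I\<close> by their traces on
  \<open>P\<close> and on \<open>I - P\<close>; on each fibre \<open>\<Sum>\<^sub>A h A\<close> only depends on the traces, and the fibre is a set
  of amalgams, over which the weights cancel.\<close>
lemma sum_partitions_mob_weight_eq_0:
  fixes h :: "'a set \<Rightarrow> 'b::comm_monoid_add" and \<phi> :: "'b \<Rightarrow> 'c::comm_ring_1"
  assumes fin: "finite I" and "P \<subseteq> I" "P \<noteq> {}" "I - P \<noteq> {}"
    and h0: "h {} = 0" and additive: "\<And>A. A \<subseteq> I \<Longrightarrow> h A = h (P \<inter> A) + h ((I - P) \<inter> A)"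
  shows "(\<Sum>\<alpha> | partition_on I \<alpha>. of_int (mob_weight (card \<alpha>)) * \<phi> (\<Sum>A\<in>\<alpha>. h A)) = 0"
proof -
  define Q where "Q = I - P"
  define parts where "parts U = {\<alpha>. partition_on U \<alpha>}" for U :: "'a set"
  define traces where "traces \<alpha> = (trace_blocks P \<alpha>, trace_blocks Q \<alpha>)" for \<alpha>
  define H where "H y = (\<Sum>B\<in>fst y. h B) + (\<Sum>B\<in>snd y. h B)" for y
  have "finite P" "finite Q" using fin \<open>P \<subseteq> I\<close> by (auto simp: Q_def intro: finite_subset)
  have fin_parts: "finite (parts U)" if "finite U" for U
    using finitely_many_partition_on[OF that] by (simp add: parts_def)
  have "P \<inter> I = P" "Q \<inter> I = Q" "P \<union> Q = I" using \<open>P \<subseteq> I\<close> by (auto simp: Q_def)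
  then have traces_parts: "traces ` parts I \<subseteq> parts P \<times> parts Q"
    using partition_on_restrict[of I _ P] partition_on_restrict[of I _ Q]
    by (auto simp: traces_def parts_def trace_blocks_def)
  have fibre: "{\<alpha>\<in>parts I. traces \<alpha> = y} = amalgams (fst y) (snd y)" if "y \<in> parts P \<times> parts Q" for y
  proof -
    have "\<Union>(fst y) = P" "\<Union>(snd y) = Q" using that by (auto simp: parts_def partition_on_def)
    then show ?thesis using \<open>P \<union> Q = I\<close> by (auto simp: amalgams_def traces_def parts_def prod_eq_iff)
  qed
  have "finite (parts P \<times> parts Q)" using fin_parts \<open>finite P\<close> \<open>finite Q\<close> by blast
  have "(\<Sum>\<alpha>\<in>parts I. of_int (mob_weight (card \<alpha>)) * \<phi> (\<Sum>A\<in>\<alpha>. h A))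
      = (\<Sum>y\<in>parts P \<times> parts Q. \<Sum>\<alpha>\<in>{\<alpha>\<in>parts I. traces \<alpha> = y}. of_int (mob_weight (card \<alpha>)) * \<phi> (H y))"
    using sum_blocks_split[OF _ fin h0 additive]
    by (subst sum.group[symmetric, OF fin_parts[OF fin] \<open>finite (parts P \<times> parts Q)\<close> traces_parts])
       (auto intro!: sum.cong simp: parts_def H_def traces_def Q_def)
  also have "\<dots> = (\<Sum>y\<in>parts P \<times> parts Q.
      \<phi> (H y) * of_int (\<Sum>\<alpha>\<in>amalgams (fst y) (snd y). mob_weight (card \<alpha>)))"
    by (intro sum.cong refl) (simp add: fibre sum_distrib_left mult.commute)
  also have "\<dots> = 0"
  proof (intro sum.neutral ballI)
    fix y assume y: "y \<in> parts P \<times> parts Q"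
    then have "partition_on P (fst y)" "partition_on Q (snd y)" "fst y \<noteq> {}" "snd y \<noteq> {}"
      using assms(3,4) by (auto simp: parts_def partition_on_def Q_def)
    moreover have "P \<inter> Q = {}" by (simp add: Q_def)
    ultimately have "(\<Sum>\<alpha>\<in>amalgams (fst y) (snd y). mob_weight (card \<alpha>)) = 0"
      by (intro sum_amalgams_mob_weight_eq_0 separated_partitions[OF _ _ \<open>finite P\<close> \<open>finite Q\<close>])
    then show "\<phi> (H y) * of_int (\<Sum>\<alpha>\<in>amalgams (fst y) (snd y). mob_weight (card \<alpha>)) = 0"
      by simp
  qed
  finally show ?thesis by (simp add: parts_def)
qed

section \<open>Coefficients of the connected bracket\<close>

lemma set_partitionsD:
  assumes "\<alpha> \<in> set_partitions l"
  shows "partition_on {1..l} \<alpha>" "finite \<alpha>" "\<And>A. A \<in> \<alpha> \<Longrightarrow> A \<subseteq> {1..l}"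
    "\<And>A. A \<in> \<alpha> \<Longrightarrow> finite A" "\<And>A. A \<in> \<alpha> \<Longrightarrow> A \<noteq> {}"
proof -
  show part: "partition_on {1..l} \<alpha>" using assms by (simp add: set_partitions_def)
  show "finite \<alpha>" using finite_elements[OF _ part] by simp
  show sub: "A \<subseteq> {1..l}" if "A \<in> \<alpha>" for A using part that by (auto simp: partition_on_def)
  show "finite A" if "A \<in> \<alpha>" for A using sub[OF that] by (rule finite_subset) simp
  show "A \<noteq> {}" if "A \<in> \<alpha>" for A using part that by (auto simp: partition_on_def)
qed

lemma mobius_eq_mob_weight: "\<alpha> \<in> set_partitions l \<Longrightarrow> mobius \<alpha> {{1..l}} = mob_weight (card \<alpha>)"
proof -
  assume "\<alpha> \<in> set_partitions l"
  then have "{A\<in>\<alpha>. A \<subseteq> {1..l}} = \<alpha>" using set_partitionsD(3) by blast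
  then show ?thesis by (simp add: mobius_def mob_weight_def)
qed

lemma bij_betw_restrict_blocks:
  assumes part: "partition_on I \<alpha>"
  shows "bij_betw (\<lambda>m. \<lambda>A\<in>\<alpha>. restrict m A) (PiE I B) (PiE \<alpha> (\<lambda>A. PiE A B))"
proof -
  define block where "block x = (THE A. A \<in> \<alpha> \<and> x \<in> A)" for x
  have block: "block x = A" if "A \<in> \<alpha>" "x \<in> A" for A x
    unfolding block_def
    using part that by (intro the_equality) (auto simp: partition_on_def disjoint_def disjnt_def)
  have I: "I = \<Union>\<alpha>" using part by (simp add: partition_on_def)
  define glue where "glue mm = (\<lambda>x\<in>I. mm (block x) x)" for mm :: "'a set \<Rightarrow> 'a \<Rightarrow> 'b"
  have glue: "glue mm x = mm A x" if "A \<in> \<alpha>" "x \<in> A" for mm A x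
    using that I block by (auto simp: glue_def)
  show ?thesis
  proof (rule bij_betwI[where g = glue])
    show "(\<lambda>m. \<lambda>A\<in>\<alpha>. restrict m A) \<in> PiE I B \<rightarrow> PiE \<alpha> (\<lambda>A. PiE A B)"
      using I by (auto simp: PiE_iff)
    show "glue \<in> PiE \<alpha> (\<lambda>A. PiE A B) \<rightarrow> PiE I B"
    proof
      fix mm assume mm: "mm \<in> PiE \<alpha> (\<lambda>A. PiE A B)"
      have "glue mm x \<in> B x" if x: "x \<in> I" for x
      proof -
        obtain A where "A \<in> \<alpha>" "x \<in> A" using I x by blast
        then show ?thesis using mm glue by auto
      qed
      then show "glue mm \<in> PiE I B" by (auto simp: glue_def)
    qed
    show "glue (\<lambda>A\<in>\<alpha>. restrict m A) = m" if m: "m \<in> PiE I B" for m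
    proof
      fix x
      show "glue (\<lambda>A\<in>\<alpha>. restrict m A) x = m x"
      proof (cases "x \<in> I")
        case True
        then obtain A where "A \<in> \<alpha>" "x \<in> A" using I by blast
        then show ?thesis by (simp add: glue)
      qed (use m in \<open>auto simp: glue_def PiE_iff extensional_def\<close>)
    qed
    show "(\<lambda>A\<in>\<alpha>. restrict (glue mm) A) = mm" if mm: "mm \<in> PiE \<alpha> (\<lambda>A. PiE A B)" for mm
    proof
      fix A
      show "(\<lambda>A\<in>\<alpha>. restrict (glue mm) A) A = mm A"
      proof (cases "A \<in> \<alpha>")
        case True
        have "restrict (glue mm) A x = mm A x" for x
          using True mm glue by (cases "x \<in> A") (auto simp: PiE_iff extensional_def)
        then show ?thesis using True by auto
      qed (use mm in \<open>auto simp: PiE_iff extensional_def\<close>)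
    qed
  qed
qed

lemma prod_partition:
  assumes "partition_on I \<alpha>" "finite I"
  shows "(\<Prod>A\<in>\<alpha>. \<Prod>a\<in>A. f a) = (\<Prod>a\<in>I. f a)"
proof -
  have "\<forall>A\<in>\<alpha>. finite A" using assms by (auto simp: partition_on_def intro: finite_subset)
  moreover have "\<forall>A\<in>\<alpha>. \<forall>B\<in>\<alpha>. A \<noteq> B \<longrightarrow> A \<inter> B = {}"
    using assms(1) by (auto simp: partition_on_def disjoint_def disjnt_def)
  ultimately have "prod f (\<Union>\<alpha>) = (\<Prod>A\<in>\<alpha>. prod f A)"
    by (simp add: prod.Union_disjoint comp_def)
  then show ?thesis using assms(1) by (simp add: partition_on_def)
qed

lemma sprod_ubracket_prod_t_N:
  assumes \<alpha>: "\<alpha> \<in> set_partitions l" and N: "\<And>a. a \<in> {1..l} \<Longrightarrow> N a \<ge> 1"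
  shows "sprod (\<lambda>A. ubracket (\<lambda>lam. \<Prod>a\<in>A. t_N (N a) (\<zeta> a) lam)) \<alpha> r =
    (\<Sum>m\<in>{m\<in>PiE {1..l} (\<lambda>_. UNIV). (\<Sum>A\<in>\<alpha>. threshold N A m) = r}. \<Prod>j\<in>{1..l}. \<zeta> j powi m j)"
proof -
  note \<alpha>D = set_partitionsD[OF \<alpha>]
  have NA: "\<And>a. a \<in> A \<Longrightarrow> N a \<ge> 1" if "A \<in> \<alpha>" for A using \<alpha>D(3)[OF that] N by blast
  have "\<And>A. A \<in> \<alpha> \<Longrightarrow> ubracket (\<lambda>lam. \<Prod>a\<in>A. t_N (N a) (\<zeta> a) lam) =
      mono_series (\<lambda>m. \<Prod>a\<in>A. \<zeta> a powi m a) (threshold N A) (PiE A (\<lambda>_. UNIV))"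
    using ubracket_prod_t_N \<alpha>D(4) NA by blast
  then have "sprod (\<lambda>A. ubracket (\<lambda>lam. \<Prod>a\<in>A. t_N (N a) (\<zeta> a) lam)) \<alpha> r =
      sprod (\<lambda>A. mono_series (\<lambda>m. \<Prod>a\<in>A. \<zeta> a powi m a) (threshold N A) (PiE A (\<lambda>_. UNIV))) \<alpha> r"
    by (simp cong: sprod_cong)
  also have "\<dots> = (\<Sum>mm\<in>{mm\<in>PiE \<alpha> (\<lambda>A. PiE A (\<lambda>_. UNIV)). (\<Sum>A\<in>\<alpha>. threshold N A (mm A)) = r}.
      \<Prod>A\<in>\<alpha>. \<Prod>a\<in>A. \<zeta> a powi mm A a)"
  proof (rule sprod_mono_series[OF \<alpha>D(2)])
    fix A x assume "A \<in> \<alpha>"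
    show "finite {m\<in>PiE A (\<lambda>_. UNIV). threshold N A m = x}"
      by (rule finite_subset[OF _ finite_threshold_subseteq[OF \<alpha>D(4) NA, OF \<open>A \<in> \<alpha>\<close> \<open>A \<in> \<alpha>\<close>, where lam = x]])
         auto
  qed
  also have "\<dots> = (\<Sum>m\<in>{m\<in>PiE {1..l} (\<lambda>_. UNIV). (\<Sum>A\<in>\<alpha>. threshold N A m) = r}.
      \<Prod>A\<in>\<alpha>. \<Prod>a\<in>A. \<zeta> a powi m a)"
  proof -
    have "threshold N A (restrict m A) = threshold N A m" for A m
      by (rule threshold_cong) simp
    then have "bij_betw (\<lambda>m. \<lambda>A\<in>\<alpha>. restrict m A)
        {m\<in>PiE {1..l} (\<lambda>_. UNIV). (\<Sum>A\<in>\<alpha>. threshold N A m) = r}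
        {mm\<in>PiE \<alpha> (\<lambda>A. PiE A (\<lambda>_. UNIV)). (\<Sum>A\<in>\<alpha>. threshold N A (mm A)) = r}"
      by (intro bij_betw_Collect[OF bij_betw_restrict_blocks[OF \<alpha>D(1)]]) simp
    from sum.reindex_bij_betw[OF this, of "\<lambda>mm. \<Prod>A\<in>\<alpha>. \<Prod>a\<in>A. \<zeta> a powi mm A a", symmetric]
    show ?thesis by (simp cong: prod.cong)
  qed
  also have "\<dots> = (\<Sum>m\<in>{m\<in>PiE {1..l} (\<lambda>_. UNIV). (\<Sum>A\<in>\<alpha>. threshold N A m) = r}. \<Prod>j\<in>{1..l}. \<zeta> j powi m j)"
    by (intro sum.cong refl prod_partition[OF \<alpha>D(1)]) simp
  finally show ?thesis .
qed

text \<open>Coefficient of \<open>u\<^sup>r \<Prod>\<^sub>j \<zeta>\<^sub>j\<^bsup>m\<^sub>j\<^esup>\<close> in the connected bracket.\<close>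
definition cumulant_coeff :: "(nat \<Rightarrow> nat) \<Rightarrow> nat \<Rightarrow> nat multiset \<Rightarrow> (nat \<Rightarrow> int) \<Rightarrow> complex" where
  "cumulant_coeff N l r m = (\<Sum>\<alpha>\<in>set_partitions l.
     of_int (mob_weight (card \<alpha>)) * (if (\<Sum>A\<in>\<alpha>. threshold N A m) = r then 1 else 0))"

definition uniform_coeff :: "(nat \<Rightarrow> nat) \<Rightarrow> nat \<Rightarrow> nat multiset \<Rightarrow> int \<Rightarrow> complex" where
  "uniform_coeff N l r k = (\<Sum>\<alpha>\<in>set_partitions l.
     of_int (mob_weight (card \<alpha>)) * (if replicate_mset (Mexp N \<alpha> * nat \<bar>k\<bar>) (nat \<bar>k\<bar>) = r then 1 else 0))"

lemma cbracket_t_N_eq_sum: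
  assumes N: "\<And>a. a \<in> {1..l} \<Longrightarrow> N a \<ge> 1"
  shows "cbracket l (\<lambda>a. t_N (N a) (\<zeta> a)) r =
     (\<Sum>m\<in>PiE {1..l} (\<lambda>_. signed_parts r). (\<Prod>j\<in>{1..l}. \<zeta> j powi m j) * cumulant_coeff N l r m)"
proof -
  define W where "W = PiE {1..l} (\<lambda>_. signed_parts r)"
  define Z where "Z m = (\<Prod>j\<in>{1..l}. \<zeta> j powi m j)" for m
  have "finite W" unfolding W_def by (intro finite_PiE) simp_all
  have restrict_W: "{m\<in>PiE {1..l} (\<lambda>_. UNIV). (\<Sum>A\<in>\<alpha>. threshold N A m) = r} =
      {m\<in>W. (\<Sum>A\<in>\<alpha>. threshold N A m) = r}" if \<alpha>: "\<alpha> \<in> set_partitions l" for \<alpha>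
  proof -
    note \<alpha>D = set_partitionsD[OF \<alpha>]
    have "m j \<in> signed_parts r" if m: "(\<Sum>A\<in>\<alpha>. threshold N A m) = r" and j: "j \<in> {1..l}" for m j
    proof -
      obtain A where A: "A \<in> \<alpha>" "j \<in> A" using \<alpha>D(1) j unfolding partition_on_def by blast
      have "threshold N A m \<subseteq># r" using subseteq_mset_sum[OF \<alpha>D(2) A(1), of "\<lambda>A. threshold N A m"] m by simp
      then have "N j * nat \<bar>m j\<bar> \<le> count r (nat \<bar>m j\<bar>)"
        using threshold_subseteq_iff[OF \<alpha>D(4)[OF A(1)]] A(2) by blast
      then show ?thesis using N[OF j] by (rule mem_signed_parts_if_le_count[rotated])
    qed
    then show ?thesis unfolding W_def by (auto simp: PiE_iff)
  qed
  have "cbracket l (\<lambda>a. t_N (N a) (\<zeta> a)) r = (\<Sum>\<alpha>\<in>set_partitions l.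
      of_int (mob_weight (card \<alpha>)) * (\<Sum>m\<in>{m\<in>W. (\<Sum>A\<in>\<alpha>. threshold N A m) = r}. Z m))"
    unfolding cbracket_def Z_def
    by (intro sum.cong refl) (simp only: mobius_eq_mob_weight sprod_ubracket_prod_t_N N restrict_W)
  also have "\<dots> = (\<Sum>\<alpha>\<in>set_partitions l. \<Sum>m\<in>W.
      of_int (mob_weight (card \<alpha>)) * (if (\<Sum>A\<in>\<alpha>. threshold N A m) = r then Z m else 0))"
    by (intro sum.cong refl) (simp add: sum.inter_filter[OF \<open>finite W\<close>] sum_distrib_left)
  also have "\<dots> = (\<Sum>m\<in>W. Z m * cumulant_coeff N l r m)"
    unfolding cumulant_coeff_def
    by (subst sum.swap) (auto simp: sum_distrib_left intro!: sum.cong)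
  finally show ?thesis by (simp add: W_def Z_def)
qed

lemma cumulant_coeff_eq_0:
  assumes "i \<in> {1..l}" "j \<in> {1..l}" "\<bar>m i\<bar> \<noteq> \<bar>m j\<bar>"
  shows "cumulant_coeff N l r m = 0"
proof -
  define P where "P = {a\<in>{1..l}. nat \<bar>m a\<bar> = nat \<bar>m i\<bar>}"
  have "(\<Sum>\<alpha> | partition_on {1..l} \<alpha>. of_int (mob_weight (card \<alpha>)) *
      (\<lambda>x. if x = r then 1 else (0::complex)) (\<Sum>A\<in>\<alpha>. threshold N A m)) = 0"
  proof (rule sum_partitions_mob_weight_eq_0)
    show "P \<subseteq> {1..l}" "P \<noteq> {}" "{1..l} - P \<noteq> {}"
      using assms by (auto simp: P_def)
    fix A assume A: "A \<subseteq> {1..l}"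
    then have "P \<inter> A = A \<inter> {a. nat \<bar>m a\<bar> = nat \<bar>m i\<bar>}" "({1..l} - P) \<inter> A = A - {a. nat \<bar>m a\<bar> = nat \<bar>m i\<bar>}"
      by (auto simp: P_def)
    then show "threshold N A m = threshold N (P \<inter> A) m + threshold N (({1..l} - P) \<inter> A) m"
      using threshold_split[OF finite_subset[OF A]] by simp
  qed simp_all
  then show ?thesis by (simp add: cumulant_coeff_def set_partitions_def)
qed

lemma sum_set_partitions_mob_weight:
  assumes "l \<ge> 2"
  shows "(\<Sum>\<alpha>\<in>set_partitions l. mob_weight (card \<alpha>)) = 0"
proof -
  have "(\<Sum>\<alpha> | partition_on {1..l} \<alpha>. of_int (mob_weight (card \<alpha>)) *
      (\<lambda>_. 1::int) (\<Sum>A\<in>\<alpha>. (\<lambda>_. 0::nat) A)) = 0"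
  proof (rule sum_partitions_mob_weight_eq_0[of _ "{1}"])
    have "2 \<in> {1..l} - {1}" using assms by simp
    then show "{1..l} - {1} \<noteq> {}" by blast
  qed (use assms in auto)
  then show ?thesis by (simp add: set_partitions_def)
qed

lemma cumulant_coeff_uniform:
  assumes "m \<in> PiE {1..l} (\<lambda>_. {k, -k})"
  shows "cumulant_coeff N l r m = uniform_coeff N l r k"
  unfolding cumulant_coeff_def uniform_coeff_def
proof (intro sum.cong refl)
  fix \<alpha> assume \<alpha>: "\<alpha> \<in> set_partitions l"
  note \<alpha>D = set_partitionsD[OF \<alpha>]
  have "nat \<bar>m a\<bar> = nat \<bar>k\<bar>" if "A \<in> \<alpha>" "a \<in> A" for A a
    using assms \<alpha>D(3)[OF that(1)] that(2) by (auto simp: PiE_iff)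
  then have "(\<Sum>A\<in>\<alpha>. threshold N A m) = (\<Sum>A\<in>\<alpha>. replicate_mset (nat \<bar>k\<bar> * Max (N ` A)) (nat \<bar>k\<bar>))"
    using \<alpha>D(4,5) by (intro sum.cong refl threshold_uniform) auto
  also have "\<dots> = replicate_mset (Mexp N \<alpha> * nat \<bar>k\<bar>) (nat \<bar>k\<bar>)"
    by (rule multiset_eqI) (simp add: count_sum Mexp_def sum_distrib_left mult.commute)
  finally show "of_int (mob_weight (card \<alpha>)) * (if (\<Sum>A\<in>\<alpha>. threshold N A m) = r then 1 else 0) =
      of_int (mob_weight (card \<alpha>)) * (if replicate_mset (Mexp N \<alpha> * nat \<bar>k\<bar>) (nat \<bar>k\<bar>) = r then 1 else 0)"
    by simp
qed

lemma sum_PiE_uniform_abs: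
  fixes g :: "('a \<Rightarrow> int) \<Rightarrow> 'b::comm_monoid_add"
  assumes "finite I" "i \<in> I" "finite K" "\<And>k. k \<in> K \<Longrightarrow> - k \<in> K"
    and vanish: "\<And>m a b. m \<in> PiE I (\<lambda>_. K) \<Longrightarrow> a \<in> I \<Longrightarrow> b \<in> I \<Longrightarrow> \<bar>m a\<bar> \<noteq> \<bar>m b\<bar> \<Longrightarrow> g m = 0"
  shows "(\<Sum>m\<in>PiE I (\<lambda>_. K). g m) = (\<Sum>k\<in>{k\<in>K. 0 \<le> k}. \<Sum>m\<in>PiE I (\<lambda>_. {k, -k}). g m)"
proof -
  define U where "U k = PiE I (\<lambda>_. {k, -k})" for k :: int
  define K' where "K' = {k\<in>K. 0 \<le> k}"
  have "finite K'" using assms(3) by (simp add: K'_def)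
  have U_sub: "(\<Union>k\<in>K'. U k) \<subseteq> PiE I (\<lambda>_. K)"
    using assms(4) by (force simp: U_def K'_def PiE_iff)
  have "g m = 0" if m: "m \<in> PiE I (\<lambda>_. K) - (\<Union>k\<in>K'. U k)" for m
  proof -
    have "\<exists>a\<in>I. \<bar>m a\<bar> \<noteq> \<bar>m i\<bar>"
    proof (rule ccontr)
      assume "\<not> ?thesis"
      then have "m a \<in> {\<bar>m i\<bar>, - \<bar>m i\<bar>}" if "a \<in> I" for a
        using that by (auto simp: abs_if split: if_splits)
      moreover have "\<bar>m i\<bar> \<in> K'"
        using m assms(2,4) by (cases "m i \<ge> 0") (auto simp: K'_def PiE_iff)
      ultimately show False using m by (auto simp: U_def PiE_iff)
    qed
    then show ?thesis using vanish m assms(2) by blast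
  qed
  then have "(\<Sum>m\<in>PiE I (\<lambda>_. K). g m) = (\<Sum>m\<in>(\<Union>k\<in>K'. U k). g m)"
    using assms(1,3) U_sub by (intro sum.mono_neutral_right) (auto intro: finite_PiE)
  also have "\<dots> = (\<Sum>k\<in>K'. \<Sum>m\<in>U k. g m)"
  proof (rule sum.UNION_disjoint[OF \<open>finite K'\<close>])
    show "\<forall>k\<in>K'. finite (U k)" using assms(1) by (auto simp: U_def intro: finite_PiE)
    have "U k \<inter> U k' = {}" if "k \<in> K'" "k' \<in> K'" "k \<noteq> k'" for k k'
      using that assms(2) by (fastforce simp: U_def K'_def PiE_iff)
    then show "\<forall>k\<in>K'. \<forall>k'\<in>K'. k \<noteq> k' \<longrightarrow> U k \<inter> U k' = {}" by blast
  qed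
  finally show ?thesis by (simp add: U_def K'_def)
qed

lemma cbracket_t_N_coeff:
  assumes l: "l \<ge> 1" and N: "\<And>a. a \<in> {1..l} \<Longrightarrow> N a \<ge> 1"
  shows "cbracket l (\<lambda>a. t_N (N a) (\<zeta> a)) r = uniform_coeff N l r 0 +
    (\<Sum>k\<in>{k\<in>signed_parts r. 0 < k}. uniform_coeff N l r k * (\<Prod>j\<in>{1..l}. \<zeta> j powi k + \<zeta> j powi (-k)))"
proof -
  define Z where "Z m = (\<Prod>j\<in>{1..l}. \<zeta> j powi m j)" for m
  define P where "P k = (\<Prod>j\<in>{1..l}. \<Sum>x\<in>{k, -k}. \<zeta> j powi x)" for k
  have "cbracket l (\<lambda>a. t_N (N a) (\<zeta> a)) r =
      (\<Sum>m\<in>PiE {1..l} (\<lambda>_. signed_parts r). Z m * cumulant_coeff N l r m)"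
    unfolding Z_def by (rule cbracket_t_N_eq_sum[OF N])
  also have "\<dots> = (\<Sum>k\<in>{k\<in>signed_parts r. 0 \<le> k}. \<Sum>m\<in>PiE {1..l} (\<lambda>_. {k, -k}). Z m * cumulant_coeff N l r m)"
    using l by (intro sum_PiE_uniform_abs[where i = 1]) (auto simp: cumulant_coeff_eq_0)
  also have "\<dots> = (\<Sum>k\<in>{k\<in>signed_parts r. 0 \<le> k}. uniform_coeff N l r k * P k)"
  proof (intro sum.cong refl)
    fix k
    have "(\<Sum>m\<in>PiE {1..l} (\<lambda>_. {k, -k}). Z m * cumulant_coeff N l r m) =
        uniform_coeff N l r k * (\<Sum>m\<in>PiE {1..l} (\<lambda>_. {k, -k}). Z m)"
      by (simp add: cumulant_coeff_uniform sum_distrib_left mult.commute)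
    also have "(\<Sum>m\<in>PiE {1..l} (\<lambda>_. {k, -k}). Z m) = P k"
      unfolding Z_def P_def by (rule prod_sum_PiE[symmetric]) auto
    finally show "(\<Sum>m\<in>PiE {1..l} (\<lambda>_. {k, -k}). Z m * cumulant_coeff N l r m) = uniform_coeff N l r k * P k" .
  qed
  also have "{k\<in>signed_parts r. 0 \<le> k} = insert 0 {k\<in>signed_parts r. 0 < k}"
    by (auto simp: signed_parts_def)
  also have "(\<Sum>k\<in>insert 0 {k\<in>signed_parts r. 0 < k}. uniform_coeff N l r k * P k) =
      uniform_coeff N l r 0 + (\<Sum>k\<in>{k\<in>signed_parts r. 0 < k}. uniform_coeff N l r k * P k)"
    by (subst sum.insert) (auto simp: P_def)
  also have "(\<Sum>k\<in>{k\<in>signed_parts r. 0 < k}. uniform_coeff N l r k * P k) =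
      (\<Sum>k\<in>{k\<in>signed_parts r. 0 < k}. uniform_coeff N l r k * (\<Prod>j\<in>{1..l}. \<zeta> j powi k + \<zeta> j powi (-k)))"
    by (intro sum.cong refl) (auto simp: P_def)
  finally show ?thesis .
qed

section \<open>The right-hand side\<close>

lemma umon_eq: "umon k (int M * k) = replicate_mset (M * nat \<bar>k\<bar>) (nat \<bar>k\<bar>)"
proof -
  have sgn: "sgn k * (int M * k) = int M * \<bar>k\<bar>"
    by (cases "k > 0"; cases "k = 0") (auto simp: sgn_if)
  have "nat (sgn k * (int M * k)) = M * nat \<bar>k\<bar>"
    unfolding sgn by (simp add: nat_mult_distrib)
  then show ?thesis by (simp add: umon_def)
qed

lemma ssum_umon:
  assumes "M \<ge> 1"
  shows "ssum (\<lambda>m r'. mono (umon m (int M * m)) r' * P m) UNIV r =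
    (\<Sum>k\<in>signed_parts r. if replicate_mset (M * nat \<bar>k\<bar>) (nat \<bar>k\<bar>) = r then P k else 0)"
proof -
  have "ssum (\<lambda>m r'. mono (umon m (int M * m)) r' * P m) UNIV r =
      (\<Sum>\<^sub>\<infinity>k\<in>UNIV. if replicate_mset (M * nat \<bar>k\<bar>) (nat \<bar>k\<bar>) = r then P k else 0)"
    unfolding ssum_def umon_eq mono_def by (intro infsum_cong) auto
  also have "\<dots> = (\<Sum>\<^sub>\<infinity>k\<in>signed_parts r. if replicate_mset (M * nat \<bar>k\<bar>) (nat \<bar>k\<bar>) = r then P k else 0)"
  proof (rule infsum_cong_neutral)
    fix k assume "k \<in> UNIV - signed_parts r"
    then have "k \<noteq> 0" "nat \<bar>k\<bar> \<notin># r" by (auto simp: signed_parts_def)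
    moreover have "M * nat \<bar>k\<bar> \<ge> 1" using \<open>k \<noteq> 0\<close> assms by simp
    ultimately show "(if replicate_mset (M * nat \<bar>k\<bar>) (nat \<bar>k\<bar>) = r then P k else 0) = 0"
      by auto
  qed auto
  finally show ?thesis by simp
qed

lemma Mexp_pos:
  assumes \<alpha>: "\<alpha> \<in> set_partitions l" and "l \<ge> 1" and N: "\<And>a. a \<in> {1..l} \<Longrightarrow> N a \<ge> 1"
  shows "Mexp N \<alpha> \<ge> 1"
proof -
  note \<alpha>D = set_partitionsD[OF \<alpha>]
  have "1 \<in> {1..l}" using \<open>l \<ge> 1\<close> by simp
  then obtain A where A: "A \<in> \<alpha>" "1 \<in> A" using \<alpha>D(1) unfolding partition_on_def by blast
  have "1 \<le> N 1" using N \<open>l \<ge> 1\<close> by simp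
  also have "\<dots> \<le> Max (N ` A)" using \<alpha>D(4)[OF A(1)] A(2) by (intro Max_ge) auto
  also have "\<dots> \<le> Mexp N \<alpha>" unfolding Mexp_def using \<alpha>D(2) A(1) by (intro member_le_sum) auto
  finally show ?thesis .
qed

lemma sum_mobius_ssum_umon:
  assumes "l \<ge> 1" and N: "\<And>a. a \<in> {1..l} \<Longrightarrow> N a \<ge> 1"
  shows "(\<Sum>\<alpha>\<in>set_partitions l. of_int (mobius \<alpha> {{1..l}}) *
      ssum (\<lambda>m r'. mono (umon m (int (Mexp N \<alpha>) * m)) r' * P m) UNIV r) =
    (\<Sum>k\<in>signed_parts r. uniform_coeff N l r k * P k)"
proof -
  have "(\<Sum>\<alpha>\<in>set_partitions l. of_int (mobius \<alpha> {{1..l}}) *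
      ssum (\<lambda>m r'. mono (umon m (int (Mexp N \<alpha>) * m)) r' * P m) UNIV r) =
    (\<Sum>\<alpha>\<in>set_partitions l. \<Sum>k\<in>signed_parts r. of_int (mob_weight (card \<alpha>)) *
      (if replicate_mset (Mexp N \<alpha> * nat \<bar>k\<bar>) (nat \<bar>k\<bar>) = r then P k else 0))"
  proof (intro sum.cong refl)
    fix \<alpha> assume \<alpha>: "\<alpha> \<in> set_partitions l"
    show "of_int (mobius \<alpha> {{1..l}}) * ssum (\<lambda>m r'. mono (umon m (int (Mexp N \<alpha>) * m)) r' * P m) UNIV r =
      (\<Sum>k\<in>signed_parts r. of_int (mob_weight (card \<alpha>)) *
        (if replicate_mset (Mexp N \<alpha> * nat \<bar>k\<bar>) (nat \<bar>k\<bar>) = r then P k else 0))"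
      by (simp only: mobius_eq_mob_weight[OF \<alpha>] ssum_umon[OF Mexp_pos[OF \<alpha> assms]] sum_distrib_left)
  qed
  also have "\<dots> = (\<Sum>k\<in>signed_parts r. uniform_coeff N l r k * P k)"
    unfolding uniform_coeff_def
    by (subst sum.swap) (auto simp: sum_distrib_right intro!: sum.cong)
  finally show ?thesis .
qed

lemma uniform_coeff_zero:
  assumes "l \<ge> 1"
  shows "2 ^ l * uniform_coeff N l r 0 = 2 * uniform_coeff N l r 0"
proof (cases "l = 1")
  case False
  then have "(\<Sum>\<alpha>\<in>set_partitions l. mob_weight (card \<alpha>)) = 0"
    using assms by (intro sum_set_partitions_mob_weight) simp
  then have "uniform_coeff N l r 0 = 0"
    unfolding uniform_coeff_def by (simp flip: of_int_sum sum_distrib_right)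
  then show ?thesis by simp
qed simp

theorem mainTheorem4:
  fixes l :: nat and N :: "nat \<Rightarrow> nat" and \<zeta> :: "nat \<Rightarrow> complex"
  assumes "l \<ge> 1"
    and "\<And>a. a \<in> {1..l} \<Longrightarrow> N a \<ge> 1"
    and "\<And>a. a \<in> {1..l} \<Longrightarrow> \<zeta> a \<noteq> 0"
  shows "cbracket l (\<lambda>a. t_N (N a) (\<zeta> a)) =
    (\<lambda>r. (1/2) * (\<Sum>\<alpha>\<in>set_partitions l. of_int (mobius \<alpha> {{1..l}}) *
        ssum (\<lambda>m::int. \<lambda>r'. mono (umon m (int (Mexp N \<alpha>) * m)) r' *
                (\<Prod>j\<in>{1..l}. \<zeta> j powi m + \<zeta> j powi (-m))) UNIV r))"
proof
  fix r
  define P where "P k = (\<Prod>j\<in>{1..l}. \<zeta> j powi k + \<zeta> j powi (-k))" for k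
  let ?U = "uniform_coeff N l r" and ?K = "{k \<in> signed_parts r. 0 < k}"
  have symm: "?U (- k) * P (- k) = ?U k * P k" for k
    by (simp add: uniform_coeff_def P_def add.commute)
  have "cbracket l (\<lambda>a. t_N (N a) (\<zeta> a)) r = ?U 0 + (\<Sum>k\<in>?K. ?U k * P k)"
    unfolding P_def by (rule cbracket_t_N_coeff[OF assms(1,2)])
  also have "\<dots> = (1/2) * (2 ^ l * ?U 0 + (\<Sum>k\<in>?K. ?U k * P k + ?U (- k) * P (- k)))"
  proof -
    have "(\<Sum>k\<in>?K. ?U k * P k + ?U (- k) * P (- k)) = (\<Sum>k\<in>?K. ?U k * P k) + (\<Sum>k\<in>?K. ?U k * P k)"
      by (simp only: symm sum.distrib)
    then show ?thesis by (simp only: uniform_coeff_zero[OF assms(1)]) simp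
  qed
  also have "\<dots> = (1/2) * (\<Sum>k\<in>signed_parts r. ?U k * P k)"
    by (simp add: sum_signed_parts P_def mult.commute)
  also have "\<dots> = (1/2) * (\<Sum>\<alpha>\<in>set_partitions l. of_int (mobius \<alpha> {{1..l}}) *
      ssum (\<lambda>m r'. mono (umon m (int (Mexp N \<alpha>) * m)) r' * P m) UNIV r)"
    by (simp only: sum_mobius_ssum_umon[OF assms(1,2)])
  finally show "cbracket l (\<lambda>a. t_N (N a) (\<zeta> a)) r = (1/2) * (\<Sum>\<alpha>\<in>set_partitions l.
      of_int (mobius \<alpha> {{1..l}}) * ssum (\<lambda>m r'. mono (umon m (int (Mexp N \<alpha>) * m)) r' *
        (\<Prod>j\<in>{1..l}. \<zeta> j powi m + \<zeta> j powi (-m))) UNIV r)"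
    by (simp add: P_def)
qed

end
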